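(* Let $\mathfrak g$ be a $3$-dimensional complex vector space with basis $\{e_1,e_2,e_3\}$ and let $\mu$ be the product with matrix $\begin{pmatrix}0&0&0\\0&0&1\\0&i&0\end{pmatrix}$, i.e. $\mu(e_2,e_3)=0$, $\mu(e_3,e_1)=ie_3$, $\mu(e_1,e_2)=e_2$. Then $T\in\operatorname{HL}(\mu)$ if and only if its matrix has the block form $T=\begin{pmatrix}T_{11}&0\\ v&\Theta\end{pmatrix}$ with $T_{11}\in\mathbb C$, $v\in\mathbb C^2$, $\Theta\in\operatorname{Mat}_{2\times2}(\mathbb C)$ (i.e. $T_{12}=T_{13}=0$). Moreover, for such $T$, the condition $\det(\Theta-T_{11}\mathbb 1_2)\neq0$ is invariant under the $G_\mu$-action, and: (1) if $\det(\Theta-T_{11}\mathbb 1_2)\neq 0$ then $T$ is equivalent to a map of the form $\begin{pmatrix}T'_{11}&0\\0&\Theta'\end{pmatrix}$ with $T'_{11}\in\mathbb C$, $\Theta'\in\operatorname{Mat}_{2\times 2}(\mathbb C)$; (2) if $\det(\Theta-T_{11}\mathbb 1_2)=0$ then $T$ is equivalent to a map of the form $\begin{pmatrix}T'_{11}&0\\ v'&\Theta'\end{pmatrix}$ with $\det(\Theta'-T'_{11}\mathbb 1_2)=0$.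
   Context: The matrix $(T_{ij})$ of a linear map in the basis $\{e_j\}$ is defined by $T(e_j)=\sum_iT_{ij}e_i$. $\operatorname{HL}(\mu)$ is the set of linear maps $T:\mathfrak g\to\mathfrak g$ with $\mu(T(x),\mu(y,z))+\mu(T(y),\mu(z,x))+\mu(T(z),\mu(x,y))=0$ for all $x,y,z$. $G_\mu=\{g\in\operatorname{GL}(\mathfrak g)\mid g(\mu(x,y))=\mu(g(x),g(y))\ \forall x,y\}$ is the automorphism group of $\mu$; it acts on $\operatorname{HL}(\mu)$ by $T\mapsto gTg^{-1}$, and $T,T'$ are equivalent if $T'=gTg^{-1}$ for some $g\in G_\mu$. *)

theory Defs
  imports "HOL-Analysis.Analysis"
begin

text \<open>Linear maps are 3x3 matrices T :: complex^3^3 with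
  T(e_j) = sum_i T$i$j e_i, i.e. T acts by T *v x.\<close>

type_synonym vec3 = "complex ^ 3"
type_synonym mat3 = "complex ^ 3 ^ 3"

definition mu_basis :: "3 \<Rightarrow> 3 \<Rightarrow> vec3" where
  "mu_basis j k =
     (if (j, k) = (3, 1) then \<i> *s axis 3 1 else
      if (j, k) = (1, 3) then - (\<i> *s axis 3 1) else
      if (j, k) = (1, 2) then axis 2 1 else
      if (j, k) = (2, 1) then - axis 2 1 else 0)"

definition mu :: "vec3 \<Rightarrow> vec3 \<Rightarrow> vec3" where
  "mu x y = (\<Sum>j\<in>UNIV. \<Sum>k\<in>UNIV. (x $ j * y $ k) *s mu_basis j k)"

definition HL :: "mat3 set" where
  "HL = {T. \<forall>x y z. mu (T *v x) (mu y z) + mu (T *v y) (mu z x) + mu (T *v z) (mu x y) = 0}"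

definition G_mu :: "mat3 set" where
  "G_mu = {g. invertible g \<and> (\<forall>x y. g *v mu x y = mu (g *v x) (g *v y))}"

definition act :: "mat3 \<Rightarrow> mat3 \<Rightarrow> mat3" where
  "act g T = g ** T ** matrix_inv g"

text \<open>det(Theta - T11 * 1_2), where Theta is the lower-right 2x2 block (rows/cols 2,3).\<close>
definition theta_det :: "mat3 \<Rightarrow> complex" where
  "theta_det T = (T$2$2 - T$1$1) * (T$3$3 - T$1$1) - T$2$3 * T$3$2"

end

theory Submission
  imports Defs
begin

text \<open>In coordinates \<open>\<mu>(x,y) = (0, x\<^sub>1y\<^sub>2 - x\<^sub>2y\<^sub>1, i(x\<^sub>3y\<^sub>1 - x\<^sub>1y\<^sub>3))\<close>, so testing the
  Hom-Lie identity on the basis shows that \<open>T \<in> HL(\<mu>)\<close> exactly when the first row of \<open>T\<close>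
  is \<open>(T\<^sub>1\<^sub>1, 0, 0)\<close>; the same computation shows that every automorphism has this block
  lower triangular shape. For block lower triangular matrices the \<open>(1,1)\<close> entry and the
  determinant of the lower right \<open>2\<times>2\<close> block are multiplicative, so conjugation by an
  automorphism \<open>g\<close> fixes \<open>T\<^sub>1\<^sub>1\<close> and multiplies \<open>det(\<Theta> - T\<^sub>1\<^sub>1)\<close> by the product of the
  block determinants of \<open>g\<close> and \<open>g\<^sup>-\<^sup>1\<close>, which is \<open>1\<close>. Conjugating by the shear automorphism
  \<open>(1,0;p,1)\<close> replaces \<open>v\<close> by \<open>v - (\<Theta> - T\<^sub>1\<^sub>1)p\<close>; if \<open>\<Theta> - T\<^sub>1\<^sub>1\<close> is invertible,
  Cramer's rule gives a \<open>p\<close> killing \<open>v\<close>. In the degenerate case the identity is a witness.\<close>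

lemma mu_nth:
  "mu x y $ 1 = 0"
  "mu x y $ 2 = x$1 * y$2 - x$2 * y$1"
  "mu x y $ 3 = \<i> * (x$3 * y$1 - x$1 * y$3)"
  by (simp_all add: mu_def mu_basis_def sum_3 axis_def algebra_simps)

lemma matrix_vector_mult_nth3:
  "((A::mat3) *v x) $ i = A$i$1 * x$1 + A$i$2 * x$2 + A$i$3 * x$3"
  by (simp add: matrix_vector_mult_def sum_3)

lemma matrix_mult_nth3:
  "((A::mat3) ** B) $ i $ j = A$i$1 * B$1$j + A$i$2 * B$2$j + A$i$3 * B$3$j"
  by (simp add: matrix_matrix_mult_def sum_3)

lemma mat3_nth:
  "(mat c :: mat3)$1$1 = c" "(mat c :: mat3)$2$2 = c" "(mat c :: mat3)$3$3 = c"
  "(mat c :: mat3)$1$2 = 0" "(mat c :: mat3)$1$3 = 0" "(mat c :: mat3)$2$1 = 0"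
  "(mat c :: mat3)$2$3 = 0" "(mat c :: mat3)$3$1 = 0" "(mat c :: mat3)$3$2 = 0"
  by (simp_all add: mat_def)

lemma mat3_eq_iff:
  "(A::mat3) = B \<longleftrightarrow> A$1$1 = B$1$1 \<and> A$1$2 = B$1$2 \<and> A$1$3 = B$1$3 \<and>
     A$2$1 = B$2$1 \<and> A$2$2 = B$2$2 \<and> A$2$3 = B$2$3 \<and>
     A$3$1 = B$3$1 \<and> A$3$2 = B$3$2 \<and> A$3$3 = B$3$3"
  by (auto simp: vec_eq_iff forall_3)

lemma matrix_diff_ldistrib:
  fixes A :: "'a::ring_1^'n^'m"
  shows "A ** (B - C) = A ** B - A ** C"
  by (simp add: vec_eq_iff matrix_matrix_mult_def sum_subtractf algebra_simps)

lemma matrix_diff_rdistrib: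
  fixes A :: "'a::ring_1^'n^'m"
  shows "(B - C) ** A = B ** A - C ** A"
  by (simp add: vec_eq_iff matrix_matrix_mult_def sum_subtractf algebra_simps)

lemma mat_matrix_mul_commute:
  fixes A :: "'a::comm_semiring_1^'n^'n"
  shows "mat c ** A = A ** mat c"
  by (simp add: vec_eq_iff matrix_matrix_mult_def mat_def if_distrib if_distribR mult.commute
      cong: if_cong)

lemma conj_diff_mat:
  fixes A B T :: "'a::comm_ring_1^'n^'n"
  assumes "A ** B = mat 1"
  shows "A ** (T - mat c) ** B = A ** T ** B - mat c"
proof -
  have "A ** mat c ** B = mat c ** (A ** B)"
    by (simp add: mat_matrix_mul_commute matrix_mul_assoc)
  then show ?thesis
    using assms by (simp add: matrix_diff_ldistrib matrix_diff_rdistrib matrix_mul_rid)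
qed

lemma invertible_matrix_inv:
  fixes A :: "'a::semiring_1^'n^'n"
  assumes "invertible A"
  shows "A ** matrix_inv A = mat 1" "matrix_inv A ** A = mat 1"
  using someI_ex[OF assms[unfolded invertible_def]] by (simp_all add: matrix_inv_def)

lemma matrix_inv_unique:
  fixes A B :: "'a::semiring_1^'n^'n"
  assumes AB: "A ** B = mat 1" and BA: "B ** A = mat 1"
  shows "matrix_inv A = B"
proof -
  have "invertible A" using AB BA invertible_def by blast
  have "matrix_inv A = matrix_inv A ** (A ** B)"
    by (simp add: AB matrix_mul_rid)
  also have "\<dots> = B"
    by (simp add: matrix_mul_assoc \<open>invertible A\<close> invertible_matrix_inv matrix_mul_lid)
  finally show ?thesis .
qed

definition block_lower :: "mat3 \<Rightarrow> bool" where
  "block_lower M \<longleftrightarrow> M$1$2 = 0 \<and> M$1$3 = 0"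

definition lower_minor :: "mat3 \<Rightarrow> complex" where
  "lower_minor M = M$2$2 * M$3$3 - M$2$3 * M$3$2"

lemma block_lower_mult:
  assumes "block_lower A" "block_lower B"
  shows "block_lower (A ** B)"
    and "(A ** B)$1$1 = A$1$1 * B$1$1"
    and "lower_minor (A ** B) = lower_minor A * lower_minor B"
  using assms by (simp_all add: block_lower_def lower_minor_def matrix_mult_nth3 algebra_simps)

lemma det_block_lower: "block_lower A \<Longrightarrow> det A = A$1$1 * lower_minor A"
  by (simp add: block_lower_def lower_minor_def det_3 algebra_simps)

lemma block_lower_matrix_inv:
  assumes "block_lower g" "invertible g"
  shows "block_lower (matrix_inv g)"
proof -
  have "det g \<noteq> 0" using assms(2) invertible_det_nz by blast
  then have "g$1$1 \<noteq> 0" using det_block_lower[OF assms(1)] by auto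
  moreover have "(g ** matrix_inv g)$1$2 = 0" "(g ** matrix_inv g)$1$3 = 0"
    using invertible_matrix_inv(1)[OF assms(2)] by (simp_all add: mat3_nth)
  ultimately show ?thesis
    using assms(1) by (simp add: block_lower_def matrix_mult_nth3)
qed

lemma theta_det_eq_lower_minor: "theta_det T = lower_minor (T - mat (T$1$1))"
  by (simp add: theta_det_def lower_minor_def mat3_nth)

lemma block_lower_diff_mat: "block_lower T \<Longrightarrow> block_lower (T - mat c)"
  by (simp add: block_lower_def mat3_nth)

lemma theta_det_act:
  assumes T: "block_lower T" and g: "block_lower g" "invertible g"
  shows "theta_det (act g T) = theta_det T"
proof -
  define h where "h = matrix_inv g"
  have gh: "g ** h = mat 1" and h: "block_lower h"
    using g by (simp_all add: h_def invertible_matrix_inv block_lower_matrix_inv)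
  have units: "g$1$1 * h$1$1 = 1" "lower_minor g * lower_minor h = 1"
    using block_lower_mult(2,3)[OF g(1) h] gh by (simp_all add: mat3_nth lower_minor_def)
  have "(act g T)$1$1 = T$1$1"
    using block_lower_mult(2)[OF block_lower_mult(1)[OF g(1) T] h] units(1)
    by (simp add: act_def h_def[symmetric] block_lower_mult(2)[OF g(1) T])
  then have "theta_det (act g T) = lower_minor (g ** (T - mat (T$1$1)) ** h)"
    by (simp add: theta_det_eq_lower_minor conj_diff_mat[OF gh] act_def h_def[symmetric])
  also have "\<dots> = lower_minor g * theta_det T * lower_minor h"
    using block_lower_diff_mat[OF T] g(1) h
    by (simp add: block_lower_mult theta_det_eq_lower_minor)
  finally show ?thesis using units(2) by (simp add: algebra_simps)
qed

lemma HL_iff_block_lower: "T \<in> HL \<longleftrightarrow> block_lower T"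
proof
  assume "T \<in> HL"
  then have "mu (T *v axis 1 1) (mu (axis 2 1) (axis 3 1)) + mu (T *v axis 2 1) (mu (axis 3 1) (axis 1 1))
      + mu (T *v axis 3 1) (mu (axis 1 1) (axis 2 1)) = 0"
    unfolding HL_def by blast
  from arg_cong[where f="\<lambda>v. v$2", OF this] arg_cong[where f="\<lambda>v. v$3", OF this]
  show "block_lower T"
    by (simp add: block_lower_def mu_nth matrix_vector_mult_nth3 axis_def)
next
  assume "block_lower T"
  then show "T \<in> HL"
    by (simp add: HL_def block_lower_def vec_eq_iff forall_3 mu_nth matrix_vector_mult_nth3
        algebra_simps)
qed

lemma G_mu_block_lower:
  assumes "g \<in> G_mu"
  shows "block_lower g"
proof -
  have "g *v mu (axis 1 1) (axis 2 1) = mu (g *v axis 1 1) (g *v axis 2 1)"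
    "g *v mu (axis 3 1) (axis 1 1) = mu (g *v axis 3 1) (g *v axis 1 1)"
    using assms unfolding G_mu_def by blast+
  from arg_cong[where f="\<lambda>v. v$1", OF this(1)] arg_cong[where f="\<lambda>v. v$1", OF this(2)]
  show ?thesis by (simp add: block_lower_def mu_nth matrix_vector_mult_nth3 axis_def)
qed

definition shear :: "complex \<Rightarrow> complex \<Rightarrow> mat3" where
  "shear u w = vector [vector [1, 0, 0], vector [u, 1, 0], vector [w, 0, 1]]"

lemma shear_nth [simp]:
  "shear u w $1$1 = 1" "shear u w $1$2 = 0" "shear u w $1$3 = 0"
  "shear u w $2$1 = u" "shear u w $2$2 = 1" "shear u w $2$3 = 0"
  "shear u w $3$1 = w" "shear u w $3$2 = 0" "shear u w $3$3 = 1"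
  by (simp_all add: shear_def)

lemma shear_mult: "shear a b ** shear c d = shear (a + c) (b + d)"
  by (simp add: mat3_eq_iff matrix_mult_nth3)

lemma shear_zero: "shear 0 0 = mat 1"
  by (simp add: mat3_eq_iff mat3_nth)

lemma matrix_inv_shear: "matrix_inv (shear u w) = shear (- u) (- w)"
  by (rule matrix_inv_unique) (simp_all add: shear_mult shear_zero)

lemma shear_in_G_mu: "shear u w \<in> G_mu"
proof -
  have "invertible (shear u w)"
    unfolding invertible_def using shear_mult shear_zero
    by (metis add.right_inverse add.left_inverse)
  moreover have "shear u w *v mu x y = mu (shear u w *v x) (shear u w *v y)" for x y
    by (simp add: vec_eq_iff forall_3 mu_nth matrix_vector_mult_nth3 algebra_simps)
  ultimately show ?thesis unfolding G_mu_def by blast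
qed

lemma mat_1_in_G_mu: "mat 1 \<in> G_mu"
  using shear_in_G_mu[of 0 0] by (simp add: shear_zero)

lemma act_mat_1: "act (mat 1) T = T"
  using matrix_inv_shear[of 0 0] by (simp add: act_def shear_zero matrix_mul_lid matrix_mul_rid)

lemma act_shear_nth:
  assumes "block_lower T"
  shows "(act (shear u w) T)$2$1 = T$2$1 - ((T$2$2 - T$1$1) * u + T$2$3 * w)"
    and "(act (shear u w) T)$3$1 = T$3$1 - (T$3$2 * u + (T$3$3 - T$1$1) * w)"
  using assms
  by (simp_all add: act_def matrix_inv_shear block_lower_def matrix_mult_nth3 algebra_simps)

lemma cramer_2x2:
  fixes a b c d x y :: "'a::field"
  assumes D: "a * d - b * c \<noteq> 0"
  shows "\<exists>u w. a * u + b * w = x \<and> c * u + d * w = y"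
proof (intro exI conjI)
  let ?D = "a * d - b * c"
  have "a * (d * x - b * y) + b * (a * y - c * x) = x * ?D"
    and "c * (d * x - b * y) + d * (a * y - c * x) = y * ?D"
    by (simp_all add: algebra_simps)
  then show "a * ((d * x - b * y) / ?D) + b * ((a * y - c * x) / ?D) = x"
    and "c * ((d * x - b * y) / ?D) + d * ((a * y - c * x) / ?D) = y"
    using D by (simp_all add: times_divide_eq_right add_divide_distrib[symmetric])
qed

lemma exists_act_block_diagonal:
  assumes T: "block_lower T" and "theta_det T \<noteq> 0"
  obtains u w where "(act (shear u w) T)$2$1 = 0" "(act (shear u w) T)$3$1 = 0"
proof -
  have "(T$2$2 - T$1$1) * (T$3$3 - T$1$1) - T$2$3 * T$3$2 \<noteq> 0"
    using assms(2) by (simp add: theta_det_def)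
  then obtain u w where "(T$2$2 - T$1$1) * u + T$2$3 * w = T$2$1"
    and "T$3$2 * u + (T$3$3 - T$1$1) * w = T$3$1"
    using cramer_2x2 by blast
  then show ?thesis
    using that[of u w] by (simp add: act_shear_nth[OF T])
qed

lemma act_block_lower:
  assumes "block_lower T" "g \<in> G_mu"
  shows "block_lower (act g T)"
proof -
  have g: "block_lower g" "invertible g"
    using assms(2) G_mu_block_lower G_mu_def by blast+
  show ?thesis
    unfolding act_def
    using block_lower_mult(1) block_lower_matrix_inv[OF g] assms(1) g(1) by blast
qed

theorem proposition5p4:
  shows "(\<forall>T. T \<in> HL \<longleftrightarrow> T$1$2 = 0 \<and> T$1$3 = 0)
    \<and> (\<forall>T g. T \<in> HL \<and> g \<in> G_mu \<longrightarrow>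
           (theta_det T \<noteq> 0 \<longleftrightarrow> theta_det (act g T) \<noteq> 0))
    \<and> (\<forall>T. T \<in> HL \<and> theta_det T \<noteq> 0 \<longrightarrow>
           (\<exists>g \<in> G_mu. (act g T)$1$2 = 0 \<and> (act g T)$1$3 = 0
                      \<and> (act g T)$2$1 = 0 \<and> (act g T)$3$1 = 0))
    \<and> (\<forall>T. T \<in> HL \<and> theta_det T = 0 \<longrightarrow>
           (\<exists>g \<in> G_mu. (act g T)$1$2 = 0 \<and> (act g T)$1$3 = 0
                      \<and> theta_det (act g T) = 0))"
proof (intro conjI allI impI)
  show "T \<in> HL \<longleftrightarrow> T$1$2 = 0 \<and> T$1$3 = 0" for T
    by (simp add: HL_iff_block_lower block_lower_def)
  show "theta_det T \<noteq> 0 \<longleftrightarrow> theta_det (act g T) \<noteq> 0" if "T \<in> HL \<and> g \<in> G_mu" for T g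
    using that theta_det_act[of T g] G_mu_block_lower[of g] HL_iff_block_lower[of T]
    by (simp add: G_mu_def)
  show "\<exists>g \<in> G_mu. (act g T)$1$2 = 0 \<and> (act g T)$1$3 = 0 \<and> (act g T)$2$1 = 0 \<and> (act g T)$3$1 = 0"
    if asm: "T \<in> HL \<and> theta_det T \<noteq> 0" for T
  proof -
    have T: "block_lower T" using asm HL_iff_block_lower by blast
    obtain u w where "(act (shear u w) T)$2$1 = 0" "(act (shear u w) T)$3$1 = 0"
      using exists_act_block_diagonal[OF T] asm by blast
    with act_block_lower[OF T shear_in_G_mu] show ?thesis
      by (intro bexI[OF _ shear_in_G_mu]) (simp add: block_lower_def)
  qed
  show "\<exists>g \<in> G_mu. (act g T)$1$2 = 0 \<and> (act g T)$1$3 = 0 \<and> theta_det (act g T) = 0"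
    if "T \<in> HL \<and> theta_det T = 0" for T
    using that by (intro bexI[OF _ mat_1_in_G_mu]) (simp add: act_mat_1 HL_iff_block_lower block_lower_def)
qed

end
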